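(* In the setting where $\bar g>0$, $\tilde\eta\in[0,1]$, $\|\mathbf{G}^T\|_h<\tilde b_0$ (with $\tilde b_0=\frac1{1-\tilde\eta}$ if $\tilde\eta\in[0,\frac13]$, $\tilde b_0=\frac1{2\tilde\eta}$ if $\tilde\eta\in(\frac13,1]$), let $\tilde\phi=\tilde\phi_{\tilde\eta}(b^2,s)$, with $b^2=\|\mathbf{G}^T\|_h^2/\bar g^2$ and $|s|\le b$, be the unique positive root of $$\|\mathbf{G}^T\|_h^2[1-(1-\tilde\eta)^2\|\mathbf{G}^T\|_h^2]\tilde\phi^4+2[1-(2-\tilde\eta)(1-\tilde\eta)\|\mathbf{G}^T\|_h^2]\bar gs\tilde\phi^3+[1-2(1-\tilde\eta)\|\mathbf{G}^T\|_h^2-(2-\tilde\eta)^2\bar g^2s^2]\tilde\phi^2-2(2-\tilde\eta)\bar gs\tilde\phi-1=0,$$ and let $A=-[1-(2-\tilde\eta)(1-\tilde\eta)\|\mathbf{G}^T\|_h^2]\tilde\phi^2+(2-\tilde\eta)^2\bar gs\tilde\phi+2-\tilde\eta$, $B=-[1-2(1-\tilde\eta)\|\mathbf{G}^T\|_h^2]\tilde\phi^2+2(2-\tilde\eta)\bar gs\tilde\phi+2$, $C=2\|\mathbf{G}^T\|_h^2[1-(1-\tilde\eta)^2\|\mathbf{G}^T\|_h^2]\tilde\phi^3+3[1-(2-\tilde\eta)(1-\tilde\eta)\|\mathbf{G}^T\|_h^2]\bar gs\tilde\phi^2+\{[1-2(1-\tilde\eta)\|\mathbf{G}^T\|_h^2]-(2-\tilde\eta)^2\bar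 g^2s^2\}\tilde\phi-(2-\tilde\eta)\bar gs$, and $H=2+\bar gs\tilde\phi$. Then the derivative $\tilde\phi_1$ of $\tilde\phi$ with respect to $b^2$ and the derivative $\tilde\phi_{12}$ of $\tilde\phi_1$ with respect to $s$ satisfy $$\tilde\phi_1=\frac{\bar g^2}{2C}[(1-\tilde\eta)B-\tilde\eta\tilde\phi^2]\tilde\phi^2,\qquad \tilde\phi_{12}=\frac{\bar g^3}{2C^3}\Big[A(B+C\tilde\phi)[(1-\tilde\eta)B-\tilde\eta\tilde\phi^2]+\tilde\eta^2H\tilde\phi^4\Big]\tilde\phi.$$
   Context: $\mathbf{G}^T=-\bar g\,\omega^\sharp$ is the gravitational wind on a Riemannian manifold $(M,h)$, $\omega^\sharp$ the gradient of a smooth function; $\tilde F_{\tilde\eta}=\alpha\tilde\phi_{\tilde\eta}(b^2,s)$ is the slippery-cross-slope metric with $\alpha=\sqrt{h(y,y)}$, $s=\beta/\alpha$, $\beta=h(y,\omega^\sharp)$. On the stated range $C\neq0$. *)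

theory Defs
  imports "HOL-Analysis.Analysis"
begin

text \<open>Parameters: gb = g-bar > 0, eta = tilde eta, t = b^2, s.  The norm of G^T is
  gb * b, so its square is gb^2 * t.\<close>

definition b0 :: "real \<Rightarrow> real" where
  "b0 eta = (if eta \<le> 1/3 then 1 / (1 - eta) else 1 / (2 * eta))"

definition quartic :: "real \<Rightarrow> real \<Rightarrow> real \<Rightarrow> real \<Rightarrow> real \<Rightarrow> real" where
  "quartic gb eta t s x =
     (let G2 = gb^2 * t in
        G2 * (1 - (1 - eta)^2 * G2) * x^4
      + 2 * (1 - (2 - eta) * (1 - eta) * G2) * gb * s * x^3
      + (1 - 2 * (1 - eta) * G2 - (2 - eta)^2 * gb^2 * s^2) * x^2
      - 2 * (2 - eta) * gb * s * x - 1)"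

definition phi :: "real \<Rightarrow> real \<Rightarrow> real \<Rightarrow> real \<Rightarrow> real" where
  "phi gb eta t s = (THE x. x > 0 \<and> quartic gb eta t s x = 0)"

definition phi1 :: "real \<Rightarrow> real \<Rightarrow> real \<Rightarrow> real \<Rightarrow> real" where
  "phi1 gb eta t s = deriv (\<lambda>t'. phi gb eta t' s) t"

definition coefA :: "real \<Rightarrow> real \<Rightarrow> real \<Rightarrow> real \<Rightarrow> real \<Rightarrow> real" where
  "coefA gb eta t s x = (let G2 = gb^2 * t in
     - (1 - (2 - eta) * (1 - eta) * G2) * x^2 + (2 - eta)^2 * gb * s * x + 2 - eta)"

definition coefB :: "real \<Rightarrow> real \<Rightarrow> real \<Rightarrow> real \<Rightarrow> real \<Rightarrow> real" where
  "coefB gb eta t s x = (let G2 = gb^2 * t in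
     - (1 - 2 * (1 - eta) * G2) * x^2 + 2 * (2 - eta) * gb * s * x + 2)"

definition coefC :: "real \<Rightarrow> real \<Rightarrow> real \<Rightarrow> real \<Rightarrow> real \<Rightarrow> real" where
  "coefC gb eta t s x = (let G2 = gb^2 * t in
       2 * G2 * (1 - (1 - eta)^2 * G2) * x^3
     + 3 * (1 - (2 - eta) * (1 - eta) * G2) * gb * s * x^2
     + ((1 - 2 * (1 - eta) * G2) - (2 - eta)^2 * gb^2 * s^2) * x
     - (2 - eta) * gb * s)"

definition coefH :: "real \<Rightarrow> real \<Rightarrow> real \<Rightarrow> real" where
  "coefH gb s x = 2 + gb * s * x"

end

theory Submission
  imports Defs "HOL-Real_Asymp.Real_Asymp"
begin

text \<open>Write \<open>G = gb\<^sup>2 t\<close> and \<open>\<sigma> = gb s\<close>. Substituting \<open>x = 1/w\<close> turns the quartic \<open>Q\<close> into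
  \<open>w\<^sup>-\<^sup>4 (R\<^sup>2 - L\<^sup>2)\<close> with \<open>R = \<surd>(w\<^sup>2 + 2\<sigma>w + G)\<close> and \<open>L = w\<^sup>2 + (2 - \<eta>)\<sigma>w + (1 - \<eta>)G\<close>;
  since \<open>L + R > 0\<close>, positive roots of \<open>Q\<close> correspond to positive zeros of \<open>L - R\<close>. This function is
  negative at \<open>0\<close>, tends to \<open>+\<infinity>\<close>, and \<open>(L - R)/(w + \<sigma>)\<close> is strictly increasing on \<open>w + \<sigma> > 0\<close>,
  a half-line containing all zeros of \<open>L - R\<close>. So \<open>\<phi>\<close> is well defined, \<open>Q\<close> changes sign at \<open>\<phi>\<close>, and the
  same algebra gives \<open>C = Q'(\<phi>)/2 > 0\<close>. A one-variable implicit function argument then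
  differentiates \<open>\<phi>\<close> in \<open>b\<^sup>2\<close> and in \<open>s\<close>; \<open>\<phi>\<^sub>1\<^sub>2\<close> comes from differentiating \<open>\<phi>\<^sub>1 = N/(2C)\<close> in \<open>s\<close>
  with \<open>\<phi>\<^sub>s = gb \<phi> A/C\<close> and reducing the result modulo \<open>Q(\<phi>) = 0\<close>.\<close>

section \<open>Sign-changing positive roots and implicit differentiation\<close>

definition crossing_root :: "(real \<Rightarrow> real) \<Rightarrow> real \<Rightarrow> bool" where
  "crossing_root f x \<longleftrightarrow> x > 0 \<and> (\<forall>y>0. sgn (f y) = sgn (y - x))"

lemma crossing_root_sign:
  assumes "crossing_root f x" and "y > 0"
  shows "f y < 0 \<longleftrightarrow> y < x" and "f y = 0 \<longleftrightarrow> y = x" and "f y > 0 \<longleftrightarrow> x < y"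
proof -
  have "sgn (f y) = sgn (y - x)" using assms by (simp add: crossing_root_def)
  then show "f y < 0 \<longleftrightarrow> y < x" and "f y = 0 \<longleftrightarrow> y = x" and "f y > 0 \<longleftrightarrow> x < y"
    by (metis sgn_less diff_less_0_iff_less, metis sgn_0_0 eq_iff_diff_eq_0,
      metis sgn_greater diff_gt_0_iff_gt)
qed

lemma crossing_root_zero: "crossing_root f x \<Longrightarrow> f x = 0"
  using crossing_root_sign(2) by (auto simp: crossing_root_def)

lemma the_crossing_root:
  assumes "crossing_root f x"
  shows "(THE y. y > 0 \<and> f y = 0) = x"
  using assms crossing_root_sign(2)[OF assms] crossing_root_zero[OF assms]
  by (intro the_equality) (auto simp: crossing_root_def)

lemma crossing_root_exists:
  fixes f :: "real \<Rightarrow> real"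
  assumes cont: "continuous_on {0..} f" and neg: "f 0 < 0" and pos: "\<forall>\<^sub>F w in at_top. f w > 0"
    and unique: "\<And>v w. v > 0 \<Longrightarrow> w > 0 \<Longrightarrow> f v = 0 \<Longrightarrow> f w = 0 \<Longrightarrow> v = w"
  shows "\<exists>w0. crossing_root f w0"
proof -
  obtain M where pos: "\<And>w. w \<ge> M \<Longrightarrow> f w > 0" using pos by (auto simp: eventually_at_top_linorder)
  have zero_between: "\<exists>z\<ge>a. z \<le> b \<and> f z = 0" if "0 \<le> a" "a \<le> b" "f a \<le> 0" "0 \<le> f b" for a b
    using that by (intro IVT') (auto intro: continuous_on_subset[OF cont])
  have no_zero_at_0: "z \<ge> 0 \<Longrightarrow> f z = 0 \<Longrightarrow> z > 0" for z
    using neg by (cases "z = 0") auto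
  have "f (max 0 M) > 0" using pos by simp
  then have "\<exists>z\<ge>0. z \<le> max 0 M \<and> f z = 0" using neg by (intro zero_between) auto
  then obtain w0 where "w0 \<ge> 0" "f w0 = 0" by blast
  then have w0: "w0 > 0" "f w0 = 0" using no_zero_at_0 by auto
  have "sgn (f w) = sgn (w - w0)" if "w > 0" for w
  proof (cases w w0 rule: linorder_cases)
    case less
    have "f w < 0"
    proof (rule ccontr)
      assume "\<not> f w < 0"
      then obtain z where "0 \<le> z" "z \<le> w" "f z = 0" using zero_between[of 0 w] neg \<open>w > 0\<close> by auto
      with unique[of z w0] no_zero_at_0 w0 less show False by auto
    qed
    then show ?thesis using less by simp
  next
    case greater
    have "f w > 0"
    proof (rule ccontr)
      assume "\<not> f w > 0"
      moreover have "f (max w M) > 0" using pos by simp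
      ultimately have "\<exists>z\<ge>w. z \<le> max w M \<and> f z = 0" using \<open>w > 0\<close> by (intro zero_between) auto
      then obtain z where "w \<le> z" "f z = 0" by blast
      with unique[of z w0] w0 greater \<open>w > 0\<close> show False by auto
    qed
    then show ?thesis using greater by simp
  qed (use w0 in simp)
  then show ?thesis using w0 unfolding crossing_root_def by blast
qed

lemma crossing_root_reciprocal:
  assumes root: "crossing_root f w" and sgn_g: "\<And>v. v > 0 \<Longrightarrow> sgn (g (1 / v)) = - sgn (f v)"
  shows "crossing_root g (1 / w)"
  unfolding crossing_root_def
proof (intro conjI allI impI)
  show "1 / w > 0" using root by (simp add: crossing_root_def)
  fix y :: real assume "y > 0"
  have "w - 1 / y = (y - 1 / w) * (w / y)" using \<open>y > 0\<close> root by (simp add: crossing_root_def field_simps)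
  then have "sgn (w - 1 / y) = sgn (y - 1 / w)" using \<open>y > 0\<close> root by (simp add: crossing_root_def sgn_mult)
  then show "sgn (g y) = sgn (y - 1 / w)"
    using sgn_g[of "1 / y"] root \<open>y > 0\<close> unfolding crossing_root_def by (simp add: sgn_minus[symmetric])
qed

lemma isCont_crossing_root:
  fixes F :: "real \<Rightarrow> real \<Rightarrow> real"
  assumes roots: "\<forall>\<^sub>F z in nhds z0. crossing_root (F z) (X z)"
    and cont: "\<And>y. isCont (\<lambda>z. F z y) z0"
  shows "isCont X z0"
  unfolding isCont_def tendsto_iff
proof (intro allI impI)
  fix \<epsilon> :: real assume "\<epsilon> > 0"
  have root0: "crossing_root (F z0) (X z0)" using eventually_nhds_x_imp_x[OF roots] .
  define a where "a = max (X z0 - \<epsilon> / 2) (X z0 / 2)"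
  define b where "b = X z0 + \<epsilon> / 2"
  have a: "0 < a" "a < X z0" "X z0 - \<epsilon> < a" and b: "X z0 < b" "b < X z0 + \<epsilon>"
    using root0 \<open>\<epsilon> > 0\<close> by (auto simp: a_def b_def crossing_root_def)
  have "F z0 a < 0" "F z0 b > 0"
    using crossing_root_sign[OF root0] a b root0 by (auto simp: crossing_root_def)
  then have "\<forall>\<^sub>F z in at z0. F z a < 0" "\<forall>\<^sub>F z in at z0. F z b > 0"
    using cont[of a] cont[of b] unfolding isCont_def by (auto dest: order_tendstoD)
  moreover have "\<forall>\<^sub>F z in at z0. crossing_root (F z) (X z)"
    using roots by (simp add: eventually_at_filter eventually_mono)
  ultimately show "\<forall>\<^sub>F z in at z0. dist (X z) (X z0) < \<epsilon>"
  proof eventually_elim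
    case (elim z)
    then have "a < X z" "X z < b"
      using crossing_root_sign[OF elim(3)] a b root0 by (auto simp: crossing_root_def)
    then show ?case using a b by (simp add: dist_real_def)
  qed
qed

text \<open>The exact factorisations \<open>split_z\<close> and \<open>split_x\<close> make \<open>X z = X z0 + g z (z - z0)\<close> near \<open>z0\<close>
  with \<open>g = -A/B\<close> continuous at \<open>z0\<close>, which is Caratheodory's form of differentiability.\<close>

lemma DERIV_implicit:
  fixes F A :: "real \<Rightarrow> real \<Rightarrow> real" and X B :: "real \<Rightarrow> real"
  assumes zero: "\<forall>\<^sub>F z in nhds z0. F z (X z) = 0"
    and contX: "isCont X z0"
    and split_z: "\<And>z x. F z x - F z0 x = (z - z0) * A z x"
    and split_x: "\<And>x. F z0 x - F z0 (X z0) = (x - X z0) * B x"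
    and contA: "isCont (\<lambda>z. A z (X z)) z0" and contB: "isCont B (X z0)" and B0: "B (X z0) \<noteq> 0"
  shows "(X has_real_derivative - A z0 (X z0) / B (X z0)) (at z0)"
proof -
  define g where "g z = - A z (X z) / B (X z)" for z
  have contBX: "isCont (\<lambda>z. B (X z)) z0" using contX contB by (rule isCont_o2)
  have "\<forall>\<^sub>F z in nhds z0. B (X z) \<noteq> 0"
    using contBX B0 by (intro tendsto_imp_eventually_ne) (auto simp: tendsto_nhds_iff isCont_def)
  with zero have "\<forall>\<^sub>F z in nhds z0. X z = X z0 + g z * (z - z0)"
  proof eventually_elim
    case (elim z)
    have "0 = (F z (X z) - F z0 (X z)) + (F z0 (X z) - F z0 (X z0))"
      using elim eventually_nhds_x_imp_x[OF zero] by simp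
    also have "\<dots> = (z - z0) * A z (X z) + (X z - X z0) * B (X z)" using split_z split_x by simp
    finally show ?case using elim(2) by (simp add: g_def field_simps)
  qed
  moreover have "isCont g z0" unfolding g_def using contA contBX B0 by (intro continuous_intros)
  then have "((\<lambda>z. X z0 + g z * (z - z0)) has_real_derivative g z0) (at z0)"
    unfolding CARAT_DERIV by (intro exI[of _ g]) auto
  ultimately show ?thesis by (subst DERIV_cong_ev[OF refl _ refl]) (auto simp: g_def)
qed

section \<open>The quartic in the variables \<open>G = gb\<^sup>2 t\<close> and \<open>\<sigma> = gb s\<close>\<close>

definition admissible :: "real \<Rightarrow> real \<Rightarrow> real \<Rightarrow> bool" where
  "admissible G \<sigma> e \<longleftrightarrow> 0 \<le> e \<and> e \<le> 1 \<and> \<sigma>^2 < G \<and> (1 - e)^2 * G < 1 \<and> e^2 * G < 1"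

lemma admissible_if_below_b0:
  fixes gb eta t s :: real
  assumes "gb > 0" and "0 \<le> eta" and "eta \<le> 1"
    and "gb * sqrt t < b0 eta"
    and "0 \<le> t" and "\<bar>s\<bar> < sqrt t"
  shows "admissible (gb^2 * t) (gb * s) eta"
proof -
  define g where "g = gb * sqrt t"
  have g0: "g \<ge> 0" and gg: "g^2 = gb^2 * t" using assms by (simp_all add: g_def power_mult_distrib)
  have "\<bar>s\<bar>^2 < (sqrt t)^2" using assms(6) by (intro power_strict_mono) auto
  then have "(gb * s)^2 < gb^2 * t" using assms(1,5) by (simp add: power_mult_distrib)
  moreover have "(1 - eta) * g < 1 \<and> eta * g < 1"
  proof (cases "eta \<le> 1/3")
    case True
    then have "(1 - eta) * g < 1" using assms(4) by (simp add: b0_def g_def field_simps)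
    moreover have "eta * g \<le> (1 - eta) * g" using True g0 by (intro mult_right_mono) auto
    ultimately show ?thesis by linarith
  next
    case False
    then have "eta * g < 1/2" using assms(4) by (simp add: b0_def g_def field_simps)
    moreover have "(1 - eta) * g \<le> 2 * eta * g" using False g0 by (intro mult_right_mono) auto
    ultimately show ?thesis by linarith
  qed
  then have "((1 - eta) * g)^2 < 1" "(eta * g)^2 < 1"
    using assms(2,3) g0 by (simp_all add: power_less_one_iff abs_square_less_1)
  ultimately show ?thesis using assms(2,3) gg unfolding admissible_def by (simp add: power_mult_distrib)
qed

lemma admissible_G_pos: "admissible G \<sigma> e \<Longrightarrow> G > 0"
  unfolding admissible_def by (smt (verit) zero_le_power2)

lemma eventually_admissible:
  assumes adm: "admissible (Gc z0) (\<sigma>c z0) e" and "isCont Gc z0" and "isCont \<sigma>c z0"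
  shows "\<forall>\<^sub>F z in nhds z0. admissible (Gc z) (\<sigma>c z) e"
proof -
  have lim: "((\<lambda>z. Gc z - (\<sigma>c z)^2) \<longlongrightarrow> Gc z0 - (\<sigma>c z0)^2) (nhds z0)"
    "((\<lambda>z. 1 - (1 - e)^2 * Gc z) \<longlongrightarrow> 1 - (1 - e)^2 * Gc z0) (nhds z0)"
    "((\<lambda>z. 1 - e^2 * Gc z) \<longlongrightarrow> 1 - e^2 * Gc z0) (nhds z0)"
    using assms(2,3) by (auto simp: tendsto_nhds_iff isCont_def intro!: tendsto_intros)
  have pos: "0 < Gc z0 - (\<sigma>c z0)^2" "0 < 1 - (1 - e)^2 * Gc z0" "0 < 1 - e^2 * Gc z0"
    and e: "0 \<le> e" "e \<le> 1" using adm by (simp_all add: admissible_def)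
  from lim(1)[THEN order_tendstoD(1), OF pos(1)] lim(2)[THEN order_tendstoD(1), OF pos(2)]
    lim(3)[THEN order_tendstoD(1), OF pos(3)]
  show ?thesis unfolding admissible_def by eventually_elim (use e in auto)
qed

definition rquartic :: "real \<Rightarrow> real \<Rightarrow> real \<Rightarrow> real \<Rightarrow> real" where
  "rquartic G \<sigma> e x = G * (1 - (1 - e)^2 * G) * x^4 + 2 * (1 - (2 - e) * (1 - e) * G) * \<sigma> * x^3
     + (1 - 2 * (1 - e) * G - (2 - e)^2 * \<sigma>^2) * x^2 - 2 * (2 - e) * \<sigma> * x - 1"

text \<open>\<open>rcoefC\<close> is half the \<open>x\<close>-derivative of \<open>rquartic\<close>.\<close>

definition rcoefC :: "real \<Rightarrow> real \<Rightarrow> real \<Rightarrow> real \<Rightarrow> real" where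
  "rcoefC G \<sigma> e x = 2 * G * (1 - (1 - e)^2 * G) * x^3 + 3 * (1 - (2 - e) * (1 - e) * G) * \<sigma> * x^2
     + ((1 - 2 * (1 - e) * G) - (2 - e)^2 * \<sigma>^2) * x - (2 - e) * \<sigma>"

definition rad :: "real \<Rightarrow> real \<Rightarrow> real \<Rightarrow> real" where
  "rad G \<sigma> w = sqrt (w^2 + 2 * \<sigma> * w + G)"

definition lquad :: "real \<Rightarrow> real \<Rightarrow> real \<Rightarrow> real \<Rightarrow> real" where
  "lquad G \<sigma> e w = w^2 + (2 - e) * \<sigma> * w + (1 - e) * G"

definition gap :: "real \<Rightarrow> real \<Rightarrow> real \<Rightarrow> real \<Rightarrow> real" where
  "gap G \<sigma> e w = lquad G \<sigma> e w - rad G \<sigma> w"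

lemma radicand_pos:
  assumes "admissible G \<sigma> e"
  shows "w^2 + 2 * \<sigma> * w + G > 0"
proof -
  have "w^2 + 2 * \<sigma> * w + G = (w + \<sigma>)^2 + (G - \<sigma>^2)" by (simp add: power2_eq_square algebra_simps)
  moreover have "G - \<sigma>^2 > 0" using assms by (simp add: admissible_def)
  ultimately show ?thesis by (metis add_nonneg_pos zero_le_power2)
qed

lemma rad_pos: "admissible G \<sigma> e \<Longrightarrow> rad G \<sigma> w > 0"
  using radicand_pos by (simp add: rad_def)

lemma rad_sq: "admissible G \<sigma> e \<Longrightarrow> (rad G \<sigma> w)^2 = w^2 + 2 * \<sigma> * w + G"
  using radicand_pos by (simp add: rad_def less_imp_le)

lemma rad_sq_ge: "admissible G \<sigma> e \<Longrightarrow> (rad G \<sigma> w)^2 \<ge> G - \<sigma>^2"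
  using rad_sq[of G \<sigma> e w] zero_le_power2[of "w + \<sigma>"] by (simp add: power2_eq_square algebra_simps)

lemma lquad_plus_rad_pos:
  assumes adm: "admissible G \<sigma> e"
  shows "lquad G \<sigma> e w + rad G \<sigma> w > 0"
proof -
  define R where "R = rad G \<sigma> w"
  have R: "R > 0" "R^2 = w^2 + 2 * \<sigma> * w + G" using rad_pos[OF adm] rad_sq[OF adm] by (simp_all add: R_def)
  have "e * (\<sigma> * w + G) < R"
  proof (cases "e * (\<sigma> * w + G) \<le> 0")
    case False
    have "G * R^2 - (\<sigma> * w + G)^2 = (G - \<sigma>^2) * w^2" unfolding R(2) by (simp add: power2_eq_square algebra_simps)
    moreover have "(G - \<sigma>^2) * w^2 \<ge> 0" using adm by (simp add: admissible_def)
    ultimately have "e^2 * (\<sigma> * w + G)^2 \<le> e^2 * (G * R^2)"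
      by (intro mult_left_mono) auto
    then have "(e * (\<sigma> * w + G))^2 \<le> (e^2 * G) * R^2"
      by (simp add: power_mult_distrib mult.assoc)
    also have "\<dots> < R^2" using adm R(1) by (simp add: admissible_def)
    finally show ?thesis using R(1) by (smt (verit) power_mono)
  qed (use R in linarith)
  moreover have "lquad G \<sigma> e w = R^2 - e * (\<sigma> * w + G)" unfolding lquad_def R(2) by (simp add: algebra_simps)
  ultimately show ?thesis unfolding R_def[symmetric] using R(1) by (smt (verit) zero_le_power2)
qed

lemma rquartic_reciprocal:
  fixes x w :: real
  assumes "x * w = 1"
  shows "rquartic G \<sigma> e x * w^4 = (w^2 + 2 * \<sigma> * w + G) - (lquad G \<sigma> e w)^2"
proof -
  have xw: "x^n * w^n = 1" for n by (metis assms power_mult_distrib power_one)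
  have "rquartic G \<sigma> e x * w^4 = G * (1 - (1 - e)^2 * G) * (x^4 * w^4)
      + 2 * (1 - (2 - e) * (1 - e) * G) * \<sigma> * (x^3 * w^3) * w
      + (1 - 2 * (1 - e) * G - (2 - e)^2 * \<sigma>^2) * (x^2 * w^2) * w^2
      - 2 * (2 - e) * \<sigma> * (x * w) * w^3 - w^4"
    unfolding rquartic_def by algebra
  also have "\<dots> = (w^2 + 2 * \<sigma> * w + G) - (lquad G \<sigma> e w)^2"
    unfolding xw assms lquad_def by algebra
  finally show ?thesis .
qed

lemma sgn_rquartic_reciprocal:
  assumes adm: "admissible G \<sigma> e" and "w > 0"
  shows "sgn (rquartic G \<sigma> e (1 / w)) = - sgn (gap G \<sigma> e w)"
proof -
  have "rquartic G \<sigma> e (1 / w) * w^4 = (rad G \<sigma> w)^2 - (lquad G \<sigma> e w)^2"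
    using rquartic_reciprocal[of "1 / w" w] rad_sq[OF adm] \<open>w > 0\<close> by simp
  also have "\<dots> = - gap G \<sigma> e w * (lquad G \<sigma> e w + rad G \<sigma> w)"
    unfolding gap_def by (simp add: power2_eq_square algebra_simps)
  finally have "sgn (rquartic G \<sigma> e (1 / w)) * sgn (w^4) = - sgn (gap G \<sigma> e w) * sgn (lquad G \<sigma> e w + rad G \<sigma> w)"
    by (metis sgn_mult sgn_minus mult_minus_left)
  then show ?thesis using lquad_plus_rad_pos[OF adm, of w] \<open>w > 0\<close> by simp
qed

section \<open>The unique positive root\<close>

lemma gap_zero_imp_shift_pos:
  assumes adm: "admissible G \<sigma> e" and "w > 0" and zero: "gap G \<sigma> e w = 0"
  shows "w + \<sigma> > 0"
proof (rule ccontr)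
  assume "\<not> w + \<sigma> > 0"
  define R where "R = rad G \<sigma> w"
  have R: "R > 0" "R^2 = w^2 + 2 * \<sigma> * w + G" using rad_pos[OF adm] rad_sq[OF adm] by (simp_all add: R_def)
  have e: "0 \<le> e" "e \<le> 1" "(1 - e)^2 * G < 1" using adm by (simp_all add: admissible_def)
  have "w * (w + \<sigma>) \<le> 0" using \<open>\<not> w + \<sigma> > 0\<close> \<open>w > 0\<close> by (simp add: mult_nonneg_nonpos)
  then have "e * R^2 \<le> e * (\<sigma> * w + G)" using e(1) unfolding R(2) by (intro mult_left_mono) (auto simp: power2_eq_square algebra_simps)
  moreover have "R = R^2 - e * (\<sigma> * w + G)"
    using zero unfolding gap_def lquad_def R_def[symmetric] R(2) by (simp add: algebra_simps)
  ultimately have "1 * R \<le> ((1 - e) * R) * R" by (simp add: power2_eq_square algebra_simps)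
  then have "1 \<le> (1 - e) * R" using R(1) by (rule mult_right_le_imp_le)
  moreover have "R^2 < G"
    using \<open>\<not> w + \<sigma> > 0\<close> \<open>w > 0\<close> mult_pos_neg[of w "w + 2 * \<sigma>"] unfolding R(2) by (simp add: power2_eq_square algebra_simps)
  then have "((1 - e) * R)^2 < 1"
    using e mult_left_mono[of "R^2" G "(1 - e)^2"] by (simp add: power_mult_distrib)
  ultimately show False by (smt (verit) one_le_power)
qed

lemma rad_cubic_pos:
  assumes adm: "admissible G \<sigma> e" and "R \<ge> 0" and "R^2 \<ge> G - \<sigma>^2"
  shows "R^3 - (2 - e) * (G - \<sigma>^2) * R + (G - \<sigma>^2) > 0"
proof -
  define D where "D = G - \<sigma>^2"
  define d where "d = sqrt D"
  have "D > 0" using adm by (simp add: admissible_def D_def)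
  then have d: "d > 0" "d^2 = D" by (simp_all add: d_def)
  have e: "0 \<le> e" "e \<le> 1" "(1 - e)^2 * G < 1" using adm by (simp_all add: admissible_def)
  have "R \<ge> d" using assms(2,3) unfolding d_def D_def by (simp add: real_le_lsqrt)
  have "((1 - e) * d)^2 \<le> (1 - e)^2 * G" unfolding power_mult_distrib d(2) D_def by (simp add: mult_left_mono)
  then have "(1 - e) * d < 1" using e(3) by (smt (verit) one_le_power)
  moreover have "d^3 - (2 - e) * D * d + D = D * (1 - (1 - e) * d)"
    unfolding d(2)[symmetric] by (simp add: power2_eq_square power3_eq_cube algebra_simps)
  ultimately have "d^3 - (2 - e) * D * d + D > 0" using \<open>D > 0\<close> by simp
  moreover have "R^2 + R * d - (1 - e) * D \<ge> 0"
    using \<open>R \<ge> d\<close> d assms(3) e(1,2) \<open>D > 0\<close> unfolding D_def[symmetric]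
    by (smt (verit) mult_right_mono mult_left_le_one_le power2_eq_square)
  then have "(R - d) * (R^2 + R * d - (1 - e) * D) \<ge> 0" using \<open>R \<ge> d\<close> by simp
  moreover have "R^3 - (2 - e) * D * R + D - (d^3 - (2 - e) * D * d + D) = (R - d) * (R^2 + R * d - (1 - e) * D)"
    unfolding d(2)[symmetric] by (simp add: power2_eq_square power3_eq_cube algebra_simps)
  ultimately show ?thesis unfolding D_def by linarith
qed

text \<open>The left-hand side is \<open>R (w + \<sigma>)\<^sup>2\<close> times the derivative of \<open>gap/(w + \<sigma>)\<close>; at a zero of
  \<open>gap\<close> it is also \<open>(w + \<sigma>) w\<^sup>2 rcoefC (1/w)\<close>. So \<open>rad_cubic_pos\<close> yields both the uniqueness of
  the root and the positivity of \<open>C\<close> there.\<close>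

lemma gap_shift_identity:
  assumes "R^2 = w^2 + 2 * \<sigma> * w + G"
  shows "(w + \<sigma>) * (R * (2 * w + (2 - e) * \<sigma>) - (w + \<sigma>)) - R * (lquad G \<sigma> e w - R)
         = R^3 - (2 - e) * (G - \<sigma>^2) * R + (G - \<sigma>^2)"
  using assms unfolding lquad_def by algebra

lemma DERIV_gap:
  assumes "admissible G \<sigma> e"
  shows "(gap G \<sigma> e has_real_derivative 2 * w + (2 - e) * \<sigma> - (w + \<sigma>) / rad G \<sigma> w) (at w)"
  unfolding gap_def lquad_def rad_def[abs_def] using radicand_pos[OF assms, of w]
  by (auto intro!: derivative_eq_intros simp: field_simps)

lemma DERIV_gap_div_shift_pos:
  assumes adm: "admissible G \<sigma> e" and "w + \<sigma> > 0"
  shows "\<exists>y>0. ((\<lambda>w. gap G \<sigma> e w / (w + \<sigma>)) has_real_derivative y) (at w)"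
proof -
  define R where "R = rad G \<sigma> w"
  have R: "R > 0" "R^2 = w^2 + 2 * \<sigma> * w + G" using rad_pos[OF adm] rad_sq[OF adm] by (simp_all add: R_def)
  define d where "d = 2 * w + (2 - e) * \<sigma> - (w + \<sigma>) / R"
  have deriv: "((\<lambda>w. gap G \<sigma> e w / (w + \<sigma>)) has_real_derivative
      (d * (w + \<sigma>) - gap G \<sigma> e w * 1) / ((w + \<sigma>) * (w + \<sigma>))) (at w)"
    using \<open>w + \<sigma> > 0\<close> unfolding d_def R_def
    by (intro DERIV_divide DERIV_gap[OF adm] derivative_eq_intros) auto
  have "d * R = R * (2 * w + (2 - e) * \<sigma>) - (w + \<sigma>)" using R(1) unfolding d_def by (simp add: field_simps)
  then have "(d * (w + \<sigma>) - gap G \<sigma> e w) * R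
      = (w + \<sigma>) * (R * (2 * w + (2 - e) * \<sigma>) - (w + \<sigma>)) - R * (lquad G \<sigma> e w - R)"
    unfolding gap_def R_def[symmetric] by algebra
  also have "\<dots> = R^3 - (2 - e) * (G - \<sigma>^2) * R + (G - \<sigma>^2)" by (rule gap_shift_identity[OF R(2)])
  finally have "d * (w + \<sigma>) - gap G \<sigma> e w > 0"
    using rad_cubic_pos[OF adm] rad_sq_ge[OF adm, of w] R(1) unfolding R_def[symmetric]
    by (smt (verit) zero_less_mult_pos2)
  then show ?thesis using deriv \<open>w + \<sigma> > 0\<close> by (intro exI conjI) auto
qed

lemma gap_zero_unique:
  assumes adm: "admissible G \<sigma> e" and "v > 0" "w > 0" "gap G \<sigma> e v = 0" "gap G \<sigma> e w = 0"
  shows "v = w"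
proof -
  \<comment> \<open>both zeros lie in \<open>w + \<sigma> > 0\<close>, where \<open>gap/(w + \<sigma>)\<close> is strictly increasing\<close>
  have less: "gap G \<sigma> e a / (a + \<sigma>) < gap G \<sigma> e b / (b + \<sigma>)" if "a + \<sigma> > 0" "a < b" for a b
    using that DERIV_gap_div_shift_pos[OF adm]
    by (intro DERIV_pos_imp_increasing[OF \<open>a < b\<close>]) (metis add_le_cancel_right order_less_le_trans)
  show ?thesis
    using less[of v w] less[of w v] gap_zero_imp_shift_pos[OF adm] assms by (cases v w rule: linorder_cases) auto
qed

lemma gap_0_neg:
  assumes adm: "admissible G \<sigma> e"
  shows "gap G \<sigma> e 0 < 0"
proof -
  define g where "g = sqrt G"
  have g: "g > 0" "g^2 = G" using admissible_G_pos[OF adm] by (simp_all add: g_def)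
  have "((1 - e) * g)^2 < 1" using adm g(2) by (simp add: admissible_def power_mult_distrib)
  then have "(1 - e) * g < 1" by (smt (verit) one_le_power)
  moreover have "gap G \<sigma> e 0 = (1 - e) * G - g" by (simp add: gap_def lquad_def rad_def g_def)
  then have "gap G \<sigma> e 0 = g * ((1 - e) * g - 1)"
    unfolding g(2)[symmetric] by (simp add: power2_eq_square algebra_simps)
  ultimately show ?thesis using g(1) by (simp add: mult_pos_neg)
qed

lemma gap_crossing_root:
  assumes "admissible G \<sigma> e"
  shows "\<exists>w. crossing_root (gap G \<sigma> e) w"
proof (rule crossing_root_exists)
  show "continuous_on {0..} (gap G \<sigma> e)"
    unfolding gap_def lquad_def rad_def by (intro continuous_intros)
  have "filterlim (gap G \<sigma> e) at_top at_top"
    unfolding gap_def lquad_def rad_def by real_asymp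
  then show "\<forall>\<^sub>F w in at_top. gap G \<sigma> e w > 0" unfolding filterlim_at_top_dense by blast
qed (use assms gap_0_neg gap_zero_unique in auto)

lemma rcoefC_reciprocal:
  fixes x w :: real
  assumes "x * w = 1"
  shows "rcoefC G \<sigma> e x * w^3
    = 2 * ((w^2 + 2 * \<sigma> * w + G) - (lquad G \<sigma> e w)^2) + w * (lquad G \<sigma> e w * (2 * w + (2 - e) * \<sigma>) - (w + \<sigma>))"
proof -
  have xw: "x^n * w^n = 1" for n by (metis assms power_mult_distrib power_one)
  have "rcoefC G \<sigma> e x * w^3 = 2 * G * (1 - (1 - e)^2 * G) * (x^3 * w^3)
      + 3 * (1 - (2 - e) * (1 - e) * G) * \<sigma> * (x^2 * w^2) * w
      + ((1 - 2 * (1 - e) * G) - (2 - e)^2 * \<sigma>^2) * (x * w) * w^2 - (2 - e) * \<sigma> * w^3"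
    unfolding rcoefC_def by algebra
  also have "\<dots> = 2 * ((w^2 + 2 * \<sigma> * w + G) - (lquad G \<sigma> e w)^2)
      + w * (lquad G \<sigma> e w * (2 * w + (2 - e) * \<sigma>) - (w + \<sigma>))"
    unfolding xw assms lquad_def by algebra
  finally show ?thesis .
qed

lemma rcoefC_pos_at_root:
  assumes adm: "admissible G \<sigma> e" and "w > 0" and zero: "gap G \<sigma> e w = 0"
  shows "rcoefC G \<sigma> e (1 / w) > 0"
proof -
  define R where "R = rad G \<sigma> w"
  have R: "R > 0" "R^2 = w^2 + 2 * \<sigma> * w + G" using rad_pos[OF adm] rad_sq[OF adm] by (simp_all add: R_def)
  have L: "lquad G \<sigma> e w = R" using zero by (simp add: gap_def R_def)
  have "(w + \<sigma>) * (R * (2 * w + (2 - e) * \<sigma>) - (w + \<sigma>)) > 0"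
    using gap_shift_identity[OF R(2), of e] rad_cubic_pos[OF adm, of R] rad_sq_ge[OF adm, of w] R(1)
    unfolding L R_def[symmetric] by simp
  then have "R * (2 * w + (2 - e) * \<sigma>) - (w + \<sigma>) > 0"
    using gap_zero_imp_shift_pos[OF assms] by (simp add: zero_less_mult_iff)
  moreover have "rcoefC G \<sigma> e (1 / w) * w^3 = w * (R * (2 * w + (2 - e) * \<sigma>) - (w + \<sigma>))"
    using rcoefC_reciprocal[of "1 / w" w G \<sigma> e] \<open>w > 0\<close> unfolding L R(2)[symmetric] by simp
  ultimately show ?thesis using \<open>w > 0\<close> by (smt (verit) zero_less_mult_iff zero_less_power)
qed

definition rroot :: "real \<Rightarrow> real \<Rightarrow> real \<Rightarrow> real" where
  "rroot G \<sigma> e = (THE x. x > 0 \<and> rquartic G \<sigma> e x = 0)"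

lemma rroot_crossing_root:
  assumes adm: "admissible G \<sigma> e"
  shows "crossing_root (rquartic G \<sigma> e) (rroot G \<sigma> e)" and "rcoefC G \<sigma> e (rroot G \<sigma> e) > 0"
proof -
  obtain w where w: "crossing_root (gap G \<sigma> e) w" using gap_crossing_root[OF adm] ..
  have root: "crossing_root (rquartic G \<sigma> e) (1 / w)"
    using w sgn_rquartic_reciprocal[OF adm] by (rule crossing_root_reciprocal)
  then have "rroot G \<sigma> e = 1 / w" unfolding rroot_def by (rule the_crossing_root)
  then show "crossing_root (rquartic G \<sigma> e) (rroot G \<sigma> e)" using root by simp
  have "w > 0" "gap G \<sigma> e w = 0" using w crossing_root_zero[OF w] by (auto simp: crossing_root_def)
  then show "rcoefC G \<sigma> e (rroot G \<sigma> e) > 0"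
    using rcoefC_pos_at_root[OF adm] \<open>rroot G \<sigma> e = 1 / w\<close> by simp
qed

section \<open>Derivatives of \<open>\<phi>\<close>\<close>

lemma quartic_eq_rquartic: "quartic gb eta t s = rquartic (gb^2 * t) (gb * s) eta"
  by (simp add: fun_eq_iff quartic_def rquartic_def Let_def power_mult_distrib)

lemma coefC_eq_rcoefC: "coefC gb eta t s = rcoefC (gb^2 * t) (gb * s) eta"
  by (simp add: fun_eq_iff coefC_def rcoefC_def Let_def power_mult_distrib)

lemma phi_eq_rroot: "phi gb eta t s = rroot (gb^2 * t) (gb * s) eta"
  by (simp add: phi_def rroot_def quartic_eq_rquartic)

definition rquartic_divdiff :: "real \<Rightarrow> real \<Rightarrow> real \<Rightarrow> real \<Rightarrow> real \<Rightarrow> real" where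
  "rquartic_divdiff G \<sigma> e x0 x = G * (1 - (1 - e)^2 * G) * (x^3 + x^2 * x0 + x * x0^2 + x0^3)
     + 2 * (1 - (2 - e) * (1 - e) * G) * \<sigma> * (x^2 + x * x0 + x0^2)
     + (1 - 2 * (1 - e) * G - (2 - e)^2 * \<sigma>^2) * (x + x0) - 2 * (2 - e) * \<sigma>"

lemma rquartic_diff: "rquartic G \<sigma> e x - rquartic G \<sigma> e x0 = (x - x0) * rquartic_divdiff G \<sigma> e x0 x"
  unfolding rquartic_def rquartic_divdiff_def by algebra

lemma rquartic_divdiff_diag: "rquartic_divdiff G \<sigma> e x0 x0 = 2 * rcoefC G \<sigma> e x0"
  unfolding rcoefC_def rquartic_divdiff_def by algebra

lemma DERIV_rroot_along:
  fixes Gc \<sigma>c :: "real \<Rightarrow> real" and A :: "real \<Rightarrow> real \<Rightarrow> real"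
  assumes adm: "admissible (Gc z0) (\<sigma>c z0) e" and contG: "isCont Gc z0" and cont\<sigma>: "isCont \<sigma>c z0"
    and split: "\<And>z x. rquartic (Gc z) (\<sigma>c z) e x - rquartic (Gc z0) (\<sigma>c z0) e x = (z - z0) * A z x"
    and contA: "\<And>p. isCont (\<lambda>(z, x). A z x) p"
  shows "((\<lambda>z. rroot (Gc z) (\<sigma>c z) e) has_real_derivative
           - A z0 (rroot (Gc z0) (\<sigma>c z0) e) / (2 * rcoefC (Gc z0) (\<sigma>c z0) e (rroot (Gc z0) (\<sigma>c z0) e)))
         (at z0)"
proof -
  define X where "X z = rroot (Gc z) (\<sigma>c z) e" for z
  have roots: "\<forall>\<^sub>F z in nhds z0. crossing_root (rquartic (Gc z) (\<sigma>c z) e) (X z)"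
    using eventually_admissible[OF adm contG cont\<sigma>]
    by eventually_elim (simp add: X_def rroot_crossing_root)
  have contX: "isCont X z0"
    using roots by (rule isCont_crossing_root)
      (use contG cont\<sigma> in \<open>unfold rquartic_def, intro continuous_intros\<close>)
  have "\<forall>\<^sub>F z in nhds z0. rquartic (Gc z) (\<sigma>c z) e (X z) = 0"
    using roots by eventually_elim (rule crossing_root_zero)
  moreover have "isCont (\<lambda>z. (z, X z)) z0" using contX by (intro continuous_intros)
  then have "isCont (\<lambda>z. A z (X z)) z0" using isCont_o2 contA by fastforce
  moreover have "isCont (rquartic_divdiff (Gc z0) (\<sigma>c z0) e (X z0)) (X z0)"
    unfolding rquartic_divdiff_def by (intro continuous_intros)
  moreover have "rquartic_divdiff (Gc z0) (\<sigma>c z0) e (X z0) (X z0) \<noteq> 0"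
    using rroot_crossing_root(2)[OF adm] by (simp add: rquartic_divdiff_diag X_def)
  ultimately have "(X has_real_derivative
      - A z0 (X z0) / rquartic_divdiff (Gc z0) (\<sigma>c z0) e (X z0) (X z0)) (at z0)"
    using contX split rquartic_diff by (intro DERIV_implicit) auto
  then show ?thesis by (simp add: X_def[abs_def] rquartic_divdiff_diag)
qed

definition phi1_num :: "real \<Rightarrow> real \<Rightarrow> real \<Rightarrow> real \<Rightarrow> real \<Rightarrow> real" where
  "phi1_num gb eta t s x = gb^2 * ((1 - eta) * coefB gb eta t s x - eta * x^2) * x^2"

lemma DERIV_phi_t:
  assumes adm: "admissible (gb^2 * t) (gb * s) eta"
  shows "((\<lambda>t'. phi gb eta t' s) has_real_derivative
           phi1_num gb eta t s (phi gb eta t s) / (2 * coefC gb eta t s (phi gb eta t s))) (at t)"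
proof -
  define A where "A z x = gb^2 * ((1 - (1 - eta)^2 * gb^2 * (z + t)) * x^4
    - 2 * (2 - eta) * (1 - eta) * gb * s * x^3 - 2 * (1 - eta) * x^2)" for z x
  have "((\<lambda>z. rroot (gb^2 * z) (gb * s) eta) has_real_derivative
      - A t (rroot (gb^2 * t) (gb * s) eta) / (2 * rcoefC (gb^2 * t) (gb * s) eta (rroot (gb^2 * t) (gb * s) eta)))
      (at t)"
  proof (rule DERIV_rroot_along)
    show "rquartic (gb^2 * z) (gb * s) eta x - rquartic (gb^2 * t) (gb * s) eta x = (z - t) * A z x" for z x
      unfolding rquartic_def A_def by algebra
  qed (use adm in \<open>auto simp: A_def split_def intro!: continuous_intros\<close>)
  moreover have "- A t x = phi1_num gb eta t s x" for x
    unfolding A_def phi1_num_def coefB_def Let_def by algebra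
  ultimately show ?thesis by (simp add: phi_eq_rroot coefC_eq_rcoefC)
qed

lemma DERIV_phi_s:
  assumes adm: "admissible (gb^2 * t) (gb * s) eta"
  shows "((\<lambda>s'. phi gb eta t s') has_real_derivative
           gb * phi gb eta t s * coefA gb eta t s (phi gb eta t s) / coefC gb eta t s (phi gb eta t s)) (at s)"
proof -
  define A where "A z x = gb * (2 * (1 - (2 - eta) * (1 - eta) * gb^2 * t) * x^3
    - (2 - eta)^2 * gb * (z + s) * x^2 - 2 * (2 - eta) * x)" for z x
  have "((\<lambda>z. rroot (gb^2 * t) (gb * z) eta) has_real_derivative
      - A s (rroot (gb^2 * t) (gb * s) eta) / (2 * rcoefC (gb^2 * t) (gb * s) eta (rroot (gb^2 * t) (gb * s) eta)))
      (at s)"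
  proof (rule DERIV_rroot_along)
    show "rquartic (gb^2 * t) (gb * z) eta x - rquartic (gb^2 * t) (gb * s) eta x = (z - s) * A z x" for z x
      unfolding rquartic_def A_def by algebra
  qed (use adm in \<open>auto simp: A_def split_def intro!: continuous_intros\<close>)
  moreover have "- A s x = 2 * (gb * x * coefA gb eta t s x)" for x
    unfolding A_def coefA_def Let_def by algebra
  ultimately show ?thesis by (simp add: phi_eq_rroot coefC_eq_rcoefC)
qed

lemma phi1_eq:
  assumes "admissible (gb^2 * t) (gb * s) eta"
  shows "phi1 gb eta t s = phi1_num gb eta t s (phi gb eta t s) / (2 * coefC gb eta t s (phi gb eta t s))"
  unfolding phi1_def using DERIV_phi_t[OF assms] by (rule DERIV_imp_deriv)

definition phi1_num_ds :: "real \<Rightarrow> real \<Rightarrow> real \<Rightarrow> real" where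
  "phi1_num_ds gb eta x = 2 * gb^3 * (1 - eta) * (2 - eta) * x^3"

definition phi1_num_dx :: "real \<Rightarrow> real \<Rightarrow> real \<Rightarrow> real \<Rightarrow> real \<Rightarrow> real" where
  "phi1_num_dx gb eta t s x = gb^2 * (((1 - eta) * (2 * (2 - eta) * gb * s - 2 * (1 - 2 * (1 - eta) * gb^2 * t) * x)
      - 2 * eta * x) * x^2 + 2 * x * ((1 - eta) * coefB gb eta t s x - eta * x^2))"

definition coefC_ds :: "real \<Rightarrow> real \<Rightarrow> real \<Rightarrow> real \<Rightarrow> real \<Rightarrow> real" where
  "coefC_ds gb eta t s x = gb * (3 * (1 - (2 - eta) * (1 - eta) * gb^2 * t) * x^2
      - 2 * (2 - eta)^2 * gb * s * x - (2 - eta))"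

definition coefC_dx :: "real \<Rightarrow> real \<Rightarrow> real \<Rightarrow> real \<Rightarrow> real \<Rightarrow> real" where
  "coefC_dx gb eta t s x = 6 * gb^2 * t * (1 - (1 - eta)^2 * gb^2 * t) * x^2
      + 6 * (1 - (2 - eta) * (1 - eta) * gb^2 * t) * gb * s * x
      + (1 - 2 * (1 - eta) * gb^2 * t - (2 - eta)^2 * gb^2 * s^2)"

lemma DERIV_phi1_num_along:
  assumes "(X has_real_derivative X') (at s)"
  shows "((\<lambda>s'. phi1_num gb eta t s' (X s')) has_real_derivative
           phi1_num_ds gb eta (X s) + phi1_num_dx gb eta t s (X s) * X') (at s)"
  unfolding phi1_num_def coefB_def Let_def
  by (rule derivative_eq_intros assms refl)+
    (simp add: phi1_num_ds_def phi1_num_dx_def coefB_def Let_def, algebra)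

lemma DERIV_coefC_along:
  assumes "(X has_real_derivative X') (at s)"
  shows "((\<lambda>s'. coefC gb eta t s' (X s')) has_real_derivative
           coefC_ds gb eta t s (X s) + coefC_dx gb eta t s (X s) * X') (at s)"
  unfolding coefC_def Let_def
  by (rule derivative_eq_intros assms refl)+
    (simp add: coefC_ds_def coefC_dx_def, algebra)

lemma phi12_identity:
  assumes "quartic gb eta t s x = 0"
  shows "let A = coefA gb eta t s x; B = coefB gb eta t s x; C = coefC gb eta t s x; H = coefH gb s x in
    (C * phi1_num_ds gb eta x + gb * x * A * phi1_num_dx gb eta t s x) * C
      - phi1_num gb eta t s x * (C * coefC_ds gb eta t s x + gb * x * A * coefC_dx gb eta t s x)
    = gb^3 * x * (A * (B + C * x) * ((1 - eta) * B - eta * x^2) + eta^2 * H * x^4)"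
  using assms unfolding coefA_def coefB_def coefC_def coefH_def quartic_def phi1_num_def
    phi1_num_ds_def phi1_num_dx_def coefC_ds_def coefC_dx_def Let_def
  by algebra

lemma DERIV_phi1_s:
  assumes adm: "admissible (gb^2 * t) (gb * s) eta"
  shows "((\<lambda>s'. phi1 gb eta t s') has_real_derivative
           (let x = phi gb eta t s; A = coefA gb eta t s x; B = coefB gb eta t s x;
                C = coefC gb eta t s x; H = coefH gb s x in
              gb^3 / (2 * C^3) * (A * (B + C * x) * ((1 - eta) * B - eta * x^2)
                                   + eta^2 * H * x^4) * x)) (at s)"
proof -
  define X where "X = (\<lambda>s'. phi gb eta t s')"
  define x where "x = phi gb eta t s"
  define A B C H where "A = coefA gb eta t s x" and "B = coefB gb eta t s x" and "C = coefC gb eta t s x"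
    and "H = coefH gb s x"
  define N Ns Nx Cs Cx where "N = phi1_num gb eta t s x" and "Ns = phi1_num_ds gb eta x"
    and "Nx = phi1_num_dx gb eta t s x" and "Cs = coefC_ds gb eta t s x" and "Cx = coefC_dx gb eta t s x"
  have root: "crossing_root (quartic gb eta t s) x" and "C > 0"
    using rroot_crossing_root[OF adm] by (simp_all add: x_def C_def phi_eq_rroot quartic_eq_rquartic coefC_eq_rcoefC)
  have near: "\<forall>\<^sub>F s' in nhds s. phi1 gb eta t s' = phi1_num gb eta t s' (X s') / (2 * coefC gb eta t s' (X s'))"
    using eventually_admissible[of "\<lambda>_. gb^2 * t" s "\<lambda>s'. gb * s'" eta] adm
    by (auto simp: X_def phi1_eq elim: eventually_mono)
  have deriv: "((\<lambda>s'. phi1_num gb eta t s' (X s') / (2 * coefC gb eta t s' (X s'))) has_real_derivative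
      ((Ns + Nx * (gb * x * A / C)) * (2 * C) - N * (2 * (Cs + Cx * (gb * x * A / C)))) / ((2 * C) * (2 * C)))
      (at s)"
  proof -
    have dX: "(X has_real_derivative gb * x * A / C) (at s)"
      using DERIV_phi_s[OF adm] by (simp add: X_def x_def A_def C_def)
    show ?thesis
      using DERIV_divide[OF DERIV_phi1_num_along[OF dX] DERIV_cmult[OF DERIV_coefC_along[OF dX], of 2]] \<open>C > 0\<close>
      by (simp add: N_def Ns_def Nx_def Cs_def Cx_def X_def x_def C_def)
  qed
  have "((Ns + Nx * (gb * x * A / C)) * (2 * C) - N * (2 * (Cs + Cx * (gb * x * A / C)))) / ((2 * C) * (2 * C))
      = ((C * Ns + gb * x * A * Nx) * C - N * (C * Cs + gb * x * A * Cx)) / (2 * C^3)"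
    using \<open>C > 0\<close> by (simp add: field_simps power3_eq_cube)
  also have "\<dots> = gb^3 / (2 * C^3) * (A * (B + C * x) * ((1 - eta) * B - eta * x^2) + eta^2 * H * x^4) * x"
    using phi12_identity[of gb eta t s x] crossing_root_zero[OF root]
    by (simp add: Let_def A_def B_def C_def H_def N_def Ns_def Nx_def Cs_def Cx_def)
  finally show ?thesis
    using deriv near unfolding Let_def x_def[symmetric] A_def[symmetric] B_def[symmetric] C_def[symmetric] H_def[symmetric]
    by (subst DERIV_cong_ev[OF refl _ refl]) (auto simp: X_def)
qed

theorem lemma4p2:
  fixes gb eta t s :: real
  assumes "gb > 0" and "0 \<le> eta" and "eta \<le> 1"
    and "gb * sqrt t < b0 eta"
    and "0 \<le> t" and "\<bar>s\<bar> < sqrt t"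
  shows "(((\<lambda>t'. phi gb eta t' s) has_real_derivative
           (let x = phi gb eta t s; B = coefB gb eta t s x; C = coefC gb eta t s x in
              gb^2 / (2 * C) * ((1 - eta) * B - eta * x^2) * x^2)) (at t)) \<and>
         ((\<lambda>s'. phi1 gb eta t s') has_real_derivative
           (let x = phi gb eta t s; A = coefA gb eta t s x; B = coefB gb eta t s x;
                C = coefC gb eta t s x; H = coefH gb s x in
              gb^3 / (2 * C^3) * (A * (B + C * x) * ((1 - eta) * B - eta * x^2)
                                   + eta^2 * H * x^4) * x)) (at s)"
proof -
  have adm: "admissible (gb^2 * t) (gb * s) eta" using admissible_if_below_b0[OF assms] .
  show ?thesis using DERIV_phi_t[OF adm] DERIV_phi1_s[OF adm] by (simp add: Let_def phi1_num_def)
qed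

end
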